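(* Let $n\ge1$, $q$ a prime power, $\mathcal{F}$ a covering of $[n]$ with no redundant basic set, and $\phi$ a permutation of $[n]$ that preserves $\mathcal{F}$. Then the map $T_\phi:\mathbb{F}_q^n\to\mathbb{F}_q^n$, $T_\phi(x_1,\dots,x_n)=(x_{\phi(1)},\dots,x_{\phi(n)})$, is a linear isometry of $(\mathbb{F}_q^n,d_{\mathcal{F}})$.
   Context: For a covering $\mathcal{F}$ of $[n]$ (a family of subsets, called basic sets, whose union is $[n]$) and $x\in\mathbb{F}_q^n$, $\mathrm{wt}_{\mathcal{F}}(x)=\min\{|\mathcal{A}|:\mathcal{A}\subset\mathcal{F},\ \mathrm{supp}(x)\subset\bigcup_{A\in\mathcal{A}}A\}$ where $\mathrm{supp}(x)=\{i:x_i\ne0\}$, and $d_{\mathcal{F}}(x,y)=\mathrm{wt}_{\mathcal{F}}(x-y)$. A basic set is redundant if it is properly contained in another basic set. A permutation $\phi$ of $[n]$ preserves $\mathcal{F}$ if $\phi(A)\in\mathcal{F}$ for every $A\in\mathcal{F}$. *)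

theory Defs
  imports Main "HOL-Combinatorics.Permutations"
begin

text \<open>Vectors of F_q^n are modelled as functions nat => 'a that vanish outside [n] = {1..n};
  the field F_q is a type of class {finite, field}.\<close>

definition vecs :: "nat \<Rightarrow> (nat \<Rightarrow> 'a::zero) set" where
  "vecs n = {x. \<forall>i. i \<notin> {1..n} \<longrightarrow> x i = 0}"

definition supp :: "nat \<Rightarrow> (nat \<Rightarrow> 'a::zero) \<Rightarrow> nat set" where
  "supp n x = {i \<in> {1..n}. x i \<noteq> 0}"

definition is_covering :: "nat \<Rightarrow> nat set set \<Rightarrow> bool" where
  "is_covering n F \<longleftrightarrow> (\<forall>A\<in>F. A \<subseteq> {1..n}) \<and> \<Union>F = {1..n}"

definition redundant :: "nat set set \<Rightarrow> nat set \<Rightarrow> bool" where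
  "redundant F A \<longleftrightarrow> A \<in> F \<and> (\<exists>B\<in>F. A \<subset> B)"

definition preserves :: "(nat \<Rightarrow> nat) \<Rightarrow> nat set set \<Rightarrow> bool" where
  "preserves \<phi> F \<longleftrightarrow> (\<forall>A\<in>F. \<phi> ` A \<in> F)"

definition wtF :: "nat \<Rightarrow> nat set set \<Rightarrow> (nat \<Rightarrow> 'a::zero) \<Rightarrow> nat" where
  "wtF n F x = Min {card \<A> | \<A>. \<A> \<subseteq> F \<and> supp n x \<subseteq> \<Union>\<A>}"

definition distF :: "nat \<Rightarrow> nat set set \<Rightarrow> (nat \<Rightarrow> 'a::ab_group_add) \<Rightarrow> (nat \<Rightarrow> 'a) \<Rightarrow> nat" where
  "distF n F x y = wtF n F (\<lambda>i. x i - y i)"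

definition Tperm :: "(nat \<Rightarrow> nat) \<Rightarrow> (nat \<Rightarrow> 'a) \<Rightarrow> (nat \<Rightarrow> 'a)" where
  "Tperm \<phi> x = (\<lambda>i. x (\<phi> i))"

definition linear_on_vecs :: "nat \<Rightarrow> ((nat \<Rightarrow> 'a::field) \<Rightarrow> (nat \<Rightarrow> 'a)) \<Rightarrow> bool" where
  "linear_on_vecs n T \<longleftrightarrow>
     (\<forall>x\<in>vecs n. \<forall>y\<in>vecs n. T (\<lambda>i. x i + y i) = (\<lambda>i. T x i + T y i)) \<and>
     (\<forall>c. \<forall>x\<in>vecs n. T (\<lambda>i. c * x i) = (\<lambda>i. c * T x i))"

end

theory Submission
  imports Defs
begin

text \<open>The support of \<open>T\<^sub>\<phi> x\<close> is the preimage under \<open>\<phi>\<close> of the support of \<open>x\<close>.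
  Since \<open>\<phi>\<close> acts injectively on the finite family \<open>F\<close> and maps it into itself, it permutes
  \<open>F\<close>.\<close>

definition cover_sizes :: "nat set set \<Rightarrow> nat set \<Rightarrow> nat set" where
  "cover_sizes F S = {card \<A> | \<A>. \<A> \<subseteq> F \<and> S \<subseteq> \<Union>\<A>}"

lemma wtF_eq_Min_cover_sizes: "wtF n F x = Min (cover_sizes F (supp n x))"
  unfolding wtF_def cover_sizes_def ..

lemma finite_covering: "is_covering n F \<Longrightarrow> finite F"
  unfolding is_covering_def by (meson Pow_iff finite_Pow_iff finite_atLeastAtMost finite_subset subsetI)

lemma preserves_image_eq:
  assumes "finite F" and "inj \<phi>" and "preserves \<phi> F"
  shows "(\<lambda>A. \<phi> ` A) ` F = F"
proof (rule card_subset_eq)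
  show "(\<lambda>A. \<phi> ` A) ` F \<subseteq> F"
    using assms(3) unfolding preserves_def by blast
  have "inj_on (\<lambda>A. \<phi> ` A) F"
    using assms(2) by (simp add: inj_on_def inj_image_eq_iff)
  then show "card ((\<lambda>A. \<phi> ` A) ` F) = card F"
    by (rule card_image)
qed (fact assms(1))

lemma preserves_inv:
  assumes "finite F" and "inj \<phi>" and "preserves \<phi> F"
  shows "preserves (inv \<phi>) F"
  unfolding preserves_def
proof
  fix A assume "A \<in> F"
  then obtain B where "B \<in> F" and "A = \<phi> ` B"
    using preserves_image_eq[OF assms] by (metis imageE)
  then show "inv \<phi> ` A \<in> F"
    using assms(2) by (simp add: image_inv_f_f)
qed

lemma cover_sizes_image:
  assumes "inj \<phi>" and "preserves \<phi> F"
  shows "cover_sizes F S \<subseteq> cover_sizes F (\<phi> ` S)"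
proof
  fix k assume "k \<in> cover_sizes F S"
  then obtain \<A> where k: "k = card \<A>" and "\<A> \<subseteq> F" and cov: "S \<subseteq> \<Union>\<A>"
    unfolding cover_sizes_def by blast
  have "(\<lambda>A. \<phi> ` A) ` \<A> \<subseteq> F"
    using \<open>\<A> \<subseteq> F\<close> assms(2) unfolding preserves_def by blast
  moreover have "\<phi> ` S \<subseteq> \<Union>((\<lambda>A. \<phi> ` A) ` \<A>)"
    using cov by blast
  moreover have "card ((\<lambda>A. \<phi> ` A) ` \<A>) = k"
    using assms(1) k by (simp add: card_image inj_on_def inj_image_eq_iff)
  ultimately show "k \<in> cover_sizes F (\<phi> ` S)"
    unfolding cover_sizes_def by blast
qed

lemma cover_sizes_permutes_image:
  assumes "finite F" and "\<phi> permutes X" and "preserves \<phi> F"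
  shows "cover_sizes F (\<phi> ` S) = cover_sizes F S"
proof
  have "inj \<phi>"
    using assms(2) by (rule permutes_inj)
  then show "cover_sizes F S \<subseteq> cover_sizes F (\<phi> ` S)"
    using assms(3) by (rule cover_sizes_image)
  have "cover_sizes F (\<phi> ` S) \<subseteq> cover_sizes F (inv \<phi> ` \<phi> ` S)"
    by (rule cover_sizes_image[OF permutes_inj[OF permutes_inv[OF assms(2)]]
          preserves_inv[OF assms(1) \<open>inj \<phi>\<close> assms(3)]])
  then show "cover_sizes F (\<phi> ` S) \<subseteq> cover_sizes F S"
    using \<open>inj \<phi>\<close> by (simp add: image_inv_f_f)
qed

lemma supp_Tperm:
  assumes "\<phi> permutes {1..n}"
  shows "\<phi> ` supp n (Tperm \<phi> x) = supp n x"
proof -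
  have "i \<in> {1..n} \<longleftrightarrow> \<phi> i \<in> {1..n}" for i
    using assms by (simp only: permutes_in_image)
  then have "supp n (Tperm \<phi> x) = \<phi> -` supp n x"
    unfolding supp_def Tperm_def by blast
  then show ?thesis
    using assms by (simp add: permutes_surj surj_image_vimage_eq)
qed

lemma wtF_Tperm:
  assumes "is_covering n F" and "\<phi> permutes {1..n}" and "preserves \<phi> F"
  shows "wtF n F (Tperm \<phi> x) = wtF n F x"
  using cover_sizes_permutes_image[OF finite_covering[OF assms(1)] assms(2,3)]
  by (simp add: wtF_eq_Min_cover_sizes flip: supp_Tperm[OF assms(2), of x])

lemma Tperm_in_vecs: "\<phi> permutes {1..n} \<Longrightarrow> x \<in> vecs n \<Longrightarrow> Tperm \<phi> x \<in> vecs n"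
  unfolding vecs_def Tperm_def by (simp add: permutes_not_in)

lemma bij_betw_Tperm:
  assumes "\<phi> permutes {1..n}"
  shows "bij_betw (Tperm \<phi>) (vecs n) (vecs n)"
proof (rule bij_betw_byWitness[where f' = "Tperm (inv \<phi>)"])
  show "\<forall>x\<in>vecs n. Tperm (inv \<phi>) (Tperm \<phi> x) = x" "\<forall>x\<in>vecs n. Tperm \<phi> (Tperm (inv \<phi>) x) = x"
    unfolding Tperm_def using permutes_inverses[OF assms] by simp_all
  show "Tperm \<phi> ` vecs n \<subseteq> vecs n" "Tperm (inv \<phi>) ` vecs n \<subseteq> vecs n"
    using Tperm_in_vecs assms permutes_inv by blast+
qed

lemma linear_on_vecs_Tperm: "linear_on_vecs n (Tperm \<phi>)"
  unfolding linear_on_vecs_def Tperm_def by simp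

lemma distF_Tperm:
  assumes "is_covering n F" and "\<phi> permutes {1..n}" and "preserves \<phi> F"
  shows "distF n F (Tperm \<phi> x) (Tperm \<phi> y) = distF n F x y"
proof -
  have "(\<lambda>i. Tperm \<phi> x i - Tperm \<phi> y i) = Tperm \<phi> (\<lambda>i. x i - y i)"
    unfolding Tperm_def ..
  then show ?thesis
    unfolding distF_def using wtF_Tperm[OF assms] by simp
qed

theorem proposition5:
  fixes n :: nat and F :: "nat set set" and \<phi> :: "nat \<Rightarrow> nat"
  assumes "n \<ge> 1"
    and "is_covering n F"
    and "\<forall>A\<in>F. \<not> redundant F A"
    and "\<phi> permutes {1..n}"
    and "preserves \<phi> F"
  shows "bij_betw (Tperm \<phi>) (vecs n) (vecs n :: (nat \<Rightarrow> 'a::{finite,field}) set)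
       \<and> linear_on_vecs n (Tperm \<phi> :: (nat \<Rightarrow> 'a) \<Rightarrow> _)
       \<and> (\<forall>x\<in>vecs n. \<forall>y\<in>vecs n.
            distF n F (Tperm \<phi> x) (Tperm \<phi> y) = distF n F x (y :: nat \<Rightarrow> 'a))"
  using bij_betw_Tperm[OF assms(4)] linear_on_vecs_Tperm distF_Tperm[OF assms(2,4,5)]
  by blast

end
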